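(* Let $G$ be a mixed abelian group in which every subgroup is an essential subgroup of some direct summand of $G$. Then $G = D \oplus R$, where $D$ is a divisible group and $R$ is a reduced torsion-free group.
   Context: All groups are additively written abelian groups; a mixed group contains both non-zero elements of finite order and elements of infinite order. A subgroup $H$ of a group $A$ is essential in $A$ if $H \cap S \neq \{0\}$ for every non-zero subgroup $S$ of $A$. *)

theory Defs
  imports Main
begin

text \<open>The group G is modelled as the whole carrier UNIV of a type of class ab_group_add.\<close>

primrec nsmul :: "nat \<Rightarrow> 'a::ab_group_add \<Rightarrow> 'a" where
  "nsmul 0 x = 0"
| "nsmul (Suc n) x = x + nsmul n x"

definition subgrp :: "'a::ab_group_add set \<Rightarrow> bool" where
  "subgrp H \<longleftrightarrow> 0 \<in> H \<and> (\<forall>x\<in>H. \<forall>y\<in>H. x + y \<in> H) \<and> (\<forall>x\<in>H. - x \<in> H)"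

definition finite_order :: "'a::ab_group_add \<Rightarrow> bool" where
  "finite_order x \<longleftrightarrow> (\<exists>n>0. nsmul n x = 0)"

definition mixed_group :: "'a::ab_group_add itself \<Rightarrow> bool" where
  "mixed_group _ \<longleftrightarrow> (\<exists>x::'a. x \<noteq> 0 \<and> finite_order x) \<and> (\<exists>y::'a. \<not> finite_order y)"

definition essential_in :: "'a::ab_group_add set \<Rightarrow> 'a set \<Rightarrow> bool" where
  "essential_in H A \<longleftrightarrow> subgrp H \<and> H \<subseteq> A \<and>
     (\<forall>S. subgrp S \<and> S \<subseteq> A \<and> S \<noteq> {0} \<longrightarrow> H \<inter> S \<noteq> {0})"

definition direct_decomp :: "'a::ab_group_add set \<Rightarrow> 'a set \<Rightarrow> bool" where
  "direct_decomp A B \<longleftrightarrow> subgrp A \<and> subgrp B \<and> A \<inter> B = {0} \<and>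
     (\<forall>x. \<exists>a\<in>A. \<exists>b\<in>B. x = a + b)"

definition direct_summand :: "'a::ab_group_add set \<Rightarrow> bool" where
  "direct_summand A \<longleftrightarrow> (\<exists>B. direct_decomp A B)"

definition divisible :: "'a::ab_group_add set \<Rightarrow> bool" where
  "divisible D \<longleftrightarrow> subgrp D \<and> (\<forall>x\<in>D. \<forall>n>0. \<exists>y\<in>D. nsmul n y = x)"

definition reduced :: "'a::ab_group_add set \<Rightarrow> bool" where
  "reduced R \<longleftrightarrow> subgrp R \<and> (\<forall>D. D \<subseteq> R \<and> divisible D \<longrightarrow> D = {0})"

definition torsion_free :: "'a::ab_group_add set \<Rightarrow> bool" where
  "torsion_free R \<longleftrightarrow> subgrp R \<and> (\<forall>x\<in>R. x \<noteq> 0 \<longrightarrow> \<not> finite_order x)"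

end

theory Submission
  imports Defs
begin

text \<open>
  The torsion part T is divisible: given u in T and m > 0, pick y of infinite order. Then
  h = m y + u has infinite order, so the cyclic group generated by h is essential in a direct
  summand A, with complement C say, and A is torsion-free. Hence u lies in C. Writing y = a + c
  with a in A and c in C, the element m c + u = h - m a lies in A \<inter> C = 0, so u = m (-c).

  The sum D of all divisible subgroups is divisible and essential in a summand A. A divisible
  subgroup essential in A is all of A: otherwise some a in A - D could be corrected by an
  element of D to a non-zero c none of whose non-zero multiples lies in D. So D is a summand;
  its complement contains no non-zero divisible subgroup, and it meets T \<subseteq> D trivially.
\<close>

lemma nsmul_add: "nsmul (m + n) x = nsmul m x + nsmul n x"
  by (induction m) (simp_all add: add.assoc)

lemma nsmul_zero [simp]: "nsmul n (0::'a::ab_group_add) = 0"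
  by (induction n) simp_all

lemma nsmul_add_distrib: "nsmul n (x + y) = nsmul n x + nsmul n y"
  by (induction n) (simp_all add: algebra_simps)

lemma nsmul_mult: "nsmul (m * n) x = nsmul m (nsmul n x)"
  by (induction m) (simp_all add: nsmul_add)

lemma nsmul_minus: "nsmul n (- x) = - nsmul n x"
  by (induction n) (simp_all add: algebra_simps)

lemma nsmul_diff: "nsmul n (x - y) = nsmul n x - nsmul n y"
  using nsmul_add_distrib[of n x "- y"] by (simp add: nsmul_minus)

lemma nsmul_diff_le: "k \<le> j \<Longrightarrow> nsmul j x - nsmul k x = nsmul (j - k) x"
  using nsmul_add[of "j - k" k x] by simp

lemma subgrp_diff: "subgrp H \<Longrightarrow> x \<in> H \<Longrightarrow> y \<in> H \<Longrightarrow> x - y \<in> H"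
  unfolding subgrp_def by (metis diff_conv_add_uminus)

lemma subgrp_nsmul: "subgrp H \<Longrightarrow> x \<in> H \<Longrightarrow> nsmul n x \<in> H"
  by (induction n) (auto simp: subgrp_def)

definition cyclic_subgrp :: "'a::ab_group_add \<Rightarrow> 'a set" where
  "cyclic_subgrp a = {nsmul i a - nsmul j a | i j. True}"

lemma cyclic_subgrp_generator: "a \<in> cyclic_subgrp a"
  unfolding cyclic_subgrp_def by (rule CollectI, rule exI[of _ 1], rule exI[of _ 0]) simp

lemma cyclic_subgrp_elem:
  assumes "x \<in> cyclic_subgrp a"
  obtains k where "x = nsmul k a \<or> x = - nsmul k a"
proof -
  obtain i j where x: "x = nsmul i a - nsmul j a"
    using assms unfolding cyclic_subgrp_def by blast
  show thesis
  proof (cases "j \<le> i")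
    case True
    with x show thesis
      using that[of "i - j"] by (simp add: nsmul_diff_le)
  next
    case False
    have "x = - (nsmul j a - nsmul i a)"
      using x by simp
    with False show thesis
      using that[of "j - i"] by (simp add: nsmul_diff_le)
  qed
qed

lemma subgrp_cyclic_subgrp: "subgrp (cyclic_subgrp a)"
proof -
  have "(nsmul i a - nsmul j a) + (nsmul k a - nsmul l a) = nsmul (i + k) a - nsmul (j + l) a"
    for i j k l by (simp add: nsmul_add)
  moreover have "- (nsmul i a - nsmul j a) = nsmul j a - nsmul i a" for i j
    by simp
  moreover have "(0::'a) = nsmul 0 a - nsmul 0 a"
    by simp
  ultimately show ?thesis
    unfolding subgrp_def cyclic_subgrp_def by blast
qed

lemma cyclic_subgrp_subset: "subgrp H \<Longrightarrow> a \<in> H \<Longrightarrow> cyclic_subgrp a \<subseteq> H"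
  unfolding cyclic_subgrp_def by (auto intro: subgrp_diff subgrp_nsmul)

lemma essential_inD:
  assumes "essential_in H A"
  shows "subgrp H" "H \<subseteq> A" "\<And>S. subgrp S \<Longrightarrow> S \<subseteq> A \<Longrightarrow> S \<noteq> {0} \<Longrightarrow> H \<inter> S \<noteq> {0}"
  using assms unfolding essential_in_def by simp_all

lemma essential_in_nsmul:
  assumes "essential_in H A" "subgrp A" "c \<in> A" "c \<noteq> 0"
  obtains k where "nsmul k c \<in> H" "nsmul k c \<noteq> 0"
proof -
  have sH: "subgrp H"
    using assms(1) by (rule essential_inD)
  have "cyclic_subgrp c \<noteq> {0}"
    using cyclic_subgrp_generator[of c] assms(4) by blast
  with assms(2,3) have "H \<inter> cyclic_subgrp c \<noteq> {0}"
    by (intro essential_inD(3)[OF assms(1)] subgrp_cyclic_subgrp cyclic_subgrp_subset)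
  moreover have "0 \<in> H \<inter> cyclic_subgrp c"
    using sH subgrp_cyclic_subgrp[of c] unfolding subgrp_def by blast
  ultimately obtain x where x: "x \<in> H" "x \<in> cyclic_subgrp c" "x \<noteq> 0"
    by blast
  obtain k where k: "x = nsmul k c \<or> x = - nsmul k c"
    using x(2) by (rule cyclic_subgrp_elem)
  have "- x \<in> H"
    using sH x(1) unfolding subgrp_def by blast
  with k x have "nsmul k c \<in> H" "nsmul k c \<noteq> 0"
    by auto
  then show thesis
    by (rule that)
qed

lemma subgrp_torsion: "subgrp {x::'a::ab_group_add. finite_order x}"
  unfolding subgrp_def
proof (intro conjI ballI)
  have "nsmul 1 (0::'a) = 0"
    by simp
  then show "0 \<in> {x::'a. finite_order x}"
    unfolding finite_order_def by blast
next
  fix x y :: 'a assume "x \<in> {x. finite_order x}" "y \<in> {x. finite_order x}"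
  then obtain n m where n: "n > 0" "nsmul n x = 0" and m: "m > 0" "nsmul m y = 0"
    unfolding finite_order_def by blast
  have "nsmul (m * n) x = 0" "nsmul (n * m) y = 0"
    using n(2) m(2) by (simp_all add: nsmul_mult)
  then have "nsmul (n * m) (x + y) = 0"
    by (simp add: nsmul_add_distrib mult.commute[of n m])
  moreover have "n * m > 0"
    using n(1) m(1) by simp
  ultimately show "x + y \<in> {x. finite_order x}"
    unfolding finite_order_def by blast
next
  fix x :: 'a assume "x \<in> {x. finite_order x}"
  then obtain n where "n > 0" "nsmul n x = 0"
    unfolding finite_order_def by blast
  then have "n > 0" "nsmul n (- x) = 0"
    by (simp_all add: nsmul_minus)
  then show "- x \<in> {x. finite_order x}"
    unfolding finite_order_def by blast
qed

lemma finite_order_nsmul: "finite_order x \<Longrightarrow> finite_order (nsmul k x)"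
  using subgrp_nsmul[OF subgrp_torsion] by blast

lemma finite_order_nsmulD: "m > 0 \<Longrightarrow> finite_order (nsmul m x) \<Longrightarrow> finite_order x"
  unfolding finite_order_def by (metis nat_0_less_mult_iff nsmul_mult)

lemma finite_order_add_cancel: "finite_order u \<Longrightarrow> finite_order (x + u) \<Longrightarrow> finite_order x"
  using subgrp_diff[OF subgrp_torsion, of "x + u" u] by simp

lemma cyclic_subgrp_torsion_free:
  assumes "\<not> finite_order h" "x \<in> cyclic_subgrp h" "finite_order x"
  shows "x = 0"
proof -
  obtain k where k: "x = nsmul k h \<or> x = - nsmul k h"
    using assms(2) by (rule cyclic_subgrp_elem)
  then have "finite_order (nsmul k h)"
    using assms(3) subgrp_torsion unfolding subgrp_def by force
  then have "k = 0"
    using assms(1) finite_order_nsmulD by blast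
  then show ?thesis
    using k by simp
qed

lemma essential_in_torsion_free:
  assumes "essential_in H A" "subgrp A" "\<forall>x\<in>H. finite_order x \<longrightarrow> x = 0"
    and "a \<in> A" "finite_order a"
  shows "a = 0"
proof (rule ccontr)
  assume "a \<noteq> 0"
  with assms(1,2,4) obtain k where "nsmul k a \<in> H" "nsmul k a \<noteq> 0"
    by (rule essential_in_nsmul)
  then show False
    using assms(3,5) finite_order_nsmul by blast
qed

lemma direct_decomp_torsion_in_complement:
  assumes "direct_decomp A C" "\<forall>a\<in>A. finite_order a \<longrightarrow> a = 0" "finite_order u"
  shows "u \<in> C"
proof -
  obtain a c where ac: "a \<in> A" "c \<in> C" "u = a + c"
    using assms(1) unfolding direct_decomp_def by blast
  obtain n where n: "n > 0" "nsmul n a = - nsmul n c"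
    using assms(3) ac(3) unfolding finite_order_def by (auto simp: nsmul_add_distrib eq_neg_iff_add_eq_0)
  have "nsmul n a \<in> A" "- nsmul n c \<in> C"
    using assms(1) ac subgrp_nsmul unfolding direct_decomp_def subgrp_def by blast+
  then have "nsmul n a \<in> A \<inter> C"
    using n(2) by simp
  then have "nsmul n a = 0"
    using assms(1) unfolding direct_decomp_def by blast
  then have "a = 0"
    using assms(2) ac(1) n(1) unfolding finite_order_def by blast
  then show ?thesis
    using ac by simp
qed

lemma torsion_divisible:
  assumes summands: "\<forall>H::'a::ab_group_add set. subgrp H \<longrightarrow> (\<exists>A. direct_summand A \<and> essential_in H A)"
    and "\<not> finite_order (y::'a)"
  shows "divisible {x::'a. finite_order x}"
  unfolding divisible_def
proof (intro conjI ballI allI impI subgrp_torsion)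
  fix u :: 'a and m :: nat
  assume u: "u \<in> {x. finite_order x}" and m: "m > 0"
  define h where "h = nsmul m y + u"
  have h: "\<not> finite_order h"
    using assms(2) u m finite_order_add_cancel finite_order_nsmulD unfolding h_def by blast
  obtain A C where ess: "essential_in (cyclic_subgrp h) A" and dec: "direct_decomp A C"
    using summands subgrp_cyclic_subgrp unfolding direct_summand_def by blast
  have sA: "subgrp A" and sC: "subgrp C"
    using dec unfolding direct_decomp_def by auto
  have "\<forall>a\<in>A. finite_order a \<longrightarrow> a = 0"
    using essential_in_torsion_free[OF ess sA] cyclic_subgrp_torsion_free[OF h] by blast
  then have uC: "u \<in> C"
    using direct_decomp_torsion_in_complement[OF dec] u by blast
  obtain a c where ac: "a \<in> A" "c \<in> C" "y = a + c"
    using dec unfolding direct_decomp_def by blast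
  have "nsmul m c + u = h - nsmul m a"
    unfolding h_def ac(3) by (simp add: nsmul_add_distrib)
  moreover have "h \<in> A"
    using essential_inD(2)[OF ess] cyclic_subgrp_generator by blast
  ultimately have "nsmul m c + u \<in> A"
    using sA ac(1) subgrp_nsmul subgrp_diff by metis
  moreover have "nsmul m c + u \<in> C"
    using sC ac(2) uC subgrp_nsmul unfolding subgrp_def by blast
  ultimately have "nsmul m c + u \<in> A \<inter> C"
    by blast
  then have "nsmul m (- c) = u"
    using dec unfolding direct_decomp_def by (simp add: nsmul_minus add_eq_0_iff)
  moreover from this have "finite_order (- c)"
    using u m finite_order_nsmulD by blast
  ultimately show "\<exists>w\<in>{x. finite_order x}. nsmul m w = u"
    by blast
qed

definition divisible_part :: "'a::ab_group_add set" where
  "divisible_part = \<Union>{D. divisible D}"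

lemma divisible_subset_divisible_part: "divisible D \<Longrightarrow> D \<subseteq> divisible_part"
  unfolding divisible_part_def by blast

lemma divisible_set_sum:
  assumes "divisible D\<^sub>1" "divisible D\<^sub>2"
  shows "divisible {a + b | a b. a \<in> D\<^sub>1 \<and> b \<in> D\<^sub>2}" (is "divisible ?S")
proof -
  have s: "subgrp D\<^sub>1" "subgrp D\<^sub>2"
    using assms unfolding divisible_def by auto
  have "subgrp ?S"
    unfolding subgrp_def
  proof (intro conjI ballI)
    show "0 \<in> ?S"
      using s unfolding subgrp_def by force
  next
    fix x y assume "x \<in> ?S" "y \<in> ?S"
    then obtain a b c d where abcd: "a \<in> D\<^sub>1" "b \<in> D\<^sub>2" "c \<in> D\<^sub>1" "d \<in> D\<^sub>2" "x = a + b" "y = c + d"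
      by blast
    then have "a + c \<in> D\<^sub>1" "b + d \<in> D\<^sub>2" "x + y = (a + c) + (b + d)"
      using s by (simp_all add: subgrp_def ac_simps)
    then show "x + y \<in> ?S"
      by blast
  next
    fix x assume "x \<in> ?S"
    then obtain a b where "a \<in> D\<^sub>1" "b \<in> D\<^sub>2" "x = a + b"
      by blast
    then have "- a \<in> D\<^sub>1" "- b \<in> D\<^sub>2" "- x = - a + - b"
      using s by (simp_all add: subgrp_def)
    then show "- x \<in> ?S"
      by blast
  qed
  moreover have "\<exists>z\<in>?S. nsmul n z = x" if x: "x \<in> ?S" and n: "n > 0" for x n
  proof -
    obtain a b where ab: "a \<in> D\<^sub>1" "b \<in> D\<^sub>2" "x = a + b"
      using x by blast
    obtain a' b' where "a' \<in> D\<^sub>1" "nsmul n a' = a" "b' \<in> D\<^sub>2" "nsmul n b' = b"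
      using assms ab n unfolding divisible_def by meson
    then show ?thesis
      using ab(3) by (intro bexI[of _ "a' + b'"]) (auto simp: nsmul_add_distrib)
  qed
  ultimately show ?thesis
    unfolding divisible_def by blast
qed

lemma divisible_part_elem:
  assumes "x \<in> divisible_part"
  obtains D where "divisible D" "x \<in> D"
  using assms unfolding divisible_part_def by blast

lemma divisible_divisible_part: "divisible (divisible_part :: 'a::ab_group_add set)"
  unfolding divisible_def subgrp_def
proof (intro conjI ballI allI impI)
  have "divisible ({0} :: 'a set)"
    unfolding divisible_def subgrp_def by simp
  then show "0 \<in> (divisible_part :: 'a set)"
    using divisible_subset_divisible_part by blast
next
  fix x y :: 'a assume "x \<in> divisible_part" "y \<in> divisible_part"
  then obtain D\<^sub>1 D\<^sub>2 where D: "divisible D\<^sub>1" "x \<in> D\<^sub>1" "divisible D\<^sub>2" "y \<in> D\<^sub>2"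
    by (metis divisible_part_elem)
  then have "x + y \<in> {a + b | a b. a \<in> D\<^sub>1 \<and> b \<in> D\<^sub>2}"
    by blast
  then show "x + y \<in> divisible_part"
    using divisible_subset_divisible_part[OF divisible_set_sum[OF D(1,3)]] by blast
next
  fix x :: 'a assume "x \<in> divisible_part"
  then obtain D where D: "divisible D" "x \<in> D"
    by (rule divisible_part_elem)
  then have "- x \<in> D"
    unfolding divisible_def subgrp_def by blast
  then show "- x \<in> divisible_part"
    using divisible_subset_divisible_part[OF D(1)] by blast
next
  fix x :: 'a and n :: nat assume "x \<in> divisible_part" "n > 0"
  moreover obtain D where D: "divisible D" "x \<in> D"
    using \<open>x \<in> divisible_part\<close> by (rule divisible_part_elem)
  ultimately obtain y where "y \<in> D" "nsmul n y = x"
    unfolding divisible_def by blast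
  then show "\<exists>y\<in>divisible_part. nsmul n y = x"
    using divisible_subset_divisible_part[OF D(1)] by blast
qed

text \<open>The multipliers k with k a \<in> H form an ideal of the naturals; n is its least positive element, or 0 if it has none.\<close>

lemma nsmul_mem_iff_dvd:
  assumes "subgrp H"
  obtains n where "\<And>k. nsmul k a \<in> H \<longleftrightarrow> n dvd k"
proof (cases "\<exists>n>0. nsmul n a \<in> H")
  case True
  define n where "n = (LEAST n. n > 0 \<and> nsmul n a \<in> H)"
  have n: "n > 0" "nsmul n a \<in> H"
    using LeastI_ex[OF True] unfolding n_def by auto
  have n_least: "r = 0" if "r < n" "nsmul r a \<in> H" for r
    using not_less_Least[of r "\<lambda>n. n > 0 \<and> nsmul n a \<in> H"] that unfolding n_def by auto
  have "nsmul k a \<in> H \<longleftrightarrow> n dvd k" for k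
  proof
    have "nsmul k a = nsmul (k div n) (nsmul n a) + nsmul (k mod n) a"
      using div_mult_mod_eq[of k n] by (metis nsmul_add nsmul_mult)
    moreover assume "nsmul k a \<in> H"
    moreover have "nsmul (k div n) (nsmul n a) \<in> H"
      using assms n(2) by (rule subgrp_nsmul)
    ultimately have "nsmul (k mod n) a \<in> H"
      using subgrp_diff[OF assms, of "nsmul k a" "nsmul (k div n) (nsmul n a)"] by simp
    then have "k mod n = 0"
      by (rule n_least[OF mod_less_divisor[OF n(1)]])
    then show "n dvd k"
      by (simp add: dvd_eq_mod_eq_0)
  next
    assume "n dvd k"
    then obtain j where "k = j * n"
      by (metis dvd_def mult.commute)
    then show "nsmul k a \<in> H"
      using assms n(2) subgrp_nsmul by (simp add: nsmul_mult)
  qed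
  then show thesis
    by (rule that)
next
  case False
  moreover have "0 \<in> H"
    using assms unfolding subgrp_def by blast
  ultimately have "nsmul k a \<in> H \<longleftrightarrow> 0 dvd k" for k
    by (metis dvd_0_left_iff gr0I nsmul.simps(1))
  then show thesis
    by (rule that)
qed

lemma essential_divisible_eq:
  assumes ess: "essential_in D A" and "divisible D" and sA: "subgrp A"
  shows "A = D"
proof (rule ccontr)
  have sD: "subgrp D" and DA: "D \<subseteq> A"
    using essential_inD[OF ess] by auto
  assume "A \<noteq> D"
  with DA obtain a where a: "a \<in> A" "a \<notin> D"
    by blast
  obtain n where n: "\<And>k. nsmul k a \<in> D \<longleftrightarrow> n dvd k"
    using nsmul_mem_iff_dvd[OF sD, where a = a] by blast
  obtain d where d: "d \<in> D" "nsmul n d = nsmul n a"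
  proof (cases "n = 0")
    case True
    with sD show thesis
      using that[of 0] unfolding subgrp_def by simp
  next
    case False
    moreover have "nsmul n a \<in> D"
      using n by simp
    ultimately obtain d where "d \<in> D" "nsmul n d = nsmul n a"
      using \<open>divisible D\<close> unfolding divisible_def by blast
    then show thesis
      by (rule that)
  qed
  define c where "c = a - d"
  have "c \<in> A" "c \<noteq> 0"
    unfolding c_def using a d(1) DA subgrp_diff[OF sA] by auto
  with ess sA obtain k where k: "nsmul k c \<in> D" "nsmul k c \<noteq> 0"
    by (rule essential_in_nsmul)
  have "nsmul k a = nsmul k c + nsmul k d"
    unfolding c_def by (simp add: nsmul_diff)
  moreover have "nsmul k d \<in> D"
    using sD d(1) by (rule subgrp_nsmul)
  ultimately have "nsmul k a \<in> D"
    using sD k(1) unfolding subgrp_def by simp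
  then obtain j where "k = j * n"
    using n by (metis dvd_def mult.commute)
  moreover have "nsmul n c = 0"
    unfolding c_def by (simp add: nsmul_diff d(2))
  ultimately show False
    using k(2) by (simp add: nsmul_mult)
qed

lemma divisible_part_direct_summand:
  assumes "\<forall>H::'a::ab_group_add set. subgrp H \<longrightarrow> (\<exists>A. direct_summand A \<and> essential_in H A)"
  obtains R where "direct_decomp (divisible_part :: 'a set) R"
proof -
  have "subgrp (divisible_part :: 'a set)"
    using divisible_divisible_part unfolding divisible_def by blast
  with assms obtain A where A: "direct_summand A" "essential_in (divisible_part :: 'a set) A"
    by blast
  then obtain R where R: "direct_decomp A R"
    unfolding direct_summand_def by blast
  then have "subgrp A"
    unfolding direct_decomp_def by blast
  with A(2) divisible_divisible_part have "A = divisible_part"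
    by (rule essential_divisible_eq)
  with R show thesis
    by (intro that) simp
qed

lemma divisible_part_complement_reduced:
  assumes "direct_decomp divisible_part R"
  shows "reduced R"
  unfolding reduced_def
proof (intro conjI allI impI)
  show "subgrp R"
    using assms unfolding direct_decomp_def by blast
  fix E assume E: "E \<subseteq> R \<and> divisible E"
  then have "E \<subseteq> divisible_part \<inter> R"
    using divisible_subset_divisible_part by blast
  moreover have "0 \<in> E"
    using E unfolding divisible_def subgrp_def by blast
  ultimately show "E = {0}"
    using assms unfolding direct_decomp_def by blast
qed

lemma divisible_part_complement_torsion_free:
  fixes R :: "'a::ab_group_add set"
  assumes "direct_decomp divisible_part R" "divisible {x::'a. finite_order x}"
  shows "torsion_free R"
  unfolding torsion_free_def
proof (intro conjI ballI impI)
  show "subgrp R"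
    using assms(1) unfolding direct_decomp_def by blast
  fix x assume "x \<in> R" "x \<noteq> 0"
  moreover have "{x. finite_order x} \<subseteq> (divisible_part :: 'a set)"
    using assms(2) by (rule divisible_subset_divisible_part)
  ultimately show "\<not> finite_order x"
    using assms(1) unfolding direct_decomp_def by blast
qed

theorem corollary2p16:
  assumes "mixed_group TYPE('a::ab_group_add)"
    and "\<forall>H::'a set. subgrp H \<longrightarrow> (\<exists>A. direct_summand A \<and> essential_in H A)"
  shows "\<exists>D R::'a set. direct_decomp D R \<and> divisible D \<and> reduced R \<and> torsion_free R"
proof -
  obtain y :: 'a where "\<not> finite_order y"
    using assms(1) unfolding mixed_group_def by blast
  with assms(2) have "divisible {x::'a. finite_order x}"
    by (rule torsion_divisible)
  moreover obtain R :: "'a set" where "direct_decomp divisible_part R"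
    using assms(2) by (rule divisible_part_direct_summand)
  ultimately show ?thesis
    using divisible_divisible_part divisible_part_complement_reduced
      divisible_part_complement_torsion_free by blast
qed

end
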